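(* Let $D\ge 1$ and let $g\in C^\infty$ be a Riemannian metric on $\mathbb{R}^D$ written as $g_x(u,v)=u^{\top}H(x)v$, such that there exist $c_1,c_2>0$ with $c_1\|u\|_2^2\le g_x(u,u)\le c_2\|u\|_2^2$ for all $x,u$, and $L_H\ge0$ with $\|H(x)-H(y)\|_{\mathcal{B}}\le L_H\|x-y\|_2$ for all $x,y$. Let $X^{(0)},X^{(1)}\subset\mathbb{R}^D$ be non-empty closed sets, at least one bounded. Then there exists a constant $C$ depending only on $c_1,c_2,L_H,d^g(X^{(0)},X^{(1)}),X^{(0)},X^{(1)}$ such that for every $N\ge1$ and every minimizer $\gamma^{*\mathrm{p}}_{\mathrm{tra},N}\in\operatorname{argmin}_{\gamma^{\mathrm{p}}\in\mathcal{C}^N_{\mathrm{p}}(X^{(0)},X^{(1)})}\mathcal{E}^g_{\mathrm{tra},N}(\gamma^{\mathrm{p}})$ with linear interpolation $\gamma^{*\mathrm{pl}}_{\mathrm{tra},N}$, $$\mathcal{L}^g(\gamma^{*\mathrm{pl}}_{\mathrm{tra},N})^2-\min_{\gamma\in\mathcal{C}_{\mathrm{ps}}(X^{(0)},X^{(1)})}\mathcal{L}^g(\gamma)^2\le\frac{C}{N^{1/2}}.$$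
   Context: $\|\cdot\|_2$ is the Euclidean norm and $\|A\|_{\mathcal{B}}$ the operator norm. $\mathcal{C}_{\mathrm{ps}}$ is the set of continuous piecewise $C^1$ curves $[0,1]\to\mathbb{R}^D$; $\mathcal{C}_{\mathrm{ps}}(X^{(0)},X^{(1)})$ those with $\gamma(0)\in X^{(0)},\gamma(1)\in X^{(1)}$. $\mathcal{E}^g(\gamma)=\int_0^1 g_{\gamma}(\dot\gamma,\dot\gamma)dt$, $\mathcal{L}^g(\gamma)=\int_0^1 g_\gamma(\dot\gamma,\dot\gamma)^{1/2}dt$, $d^g(x,y)=\inf\{\mathcal{L}^g(\gamma):\gamma\in\mathcal{C}_{\mathrm{ps}},\gamma(0)=x,\gamma(1)=y\}$, $d^g(X^{(0)},X^{(1)})=\inf_{x\in X^{(0)},y\in X^{(1)}}d^g(x,y)$. For $N\ge1$: $t_n=n/N$, $h=1/N$; $\mathcal{C}^N_{\mathrm{p}}(X^{(0)},X^{(1)})$ is the set of maps $\gamma^{\mathrm{p}}:\{t_0,\dots,t_N\}\to\mathbb{R}^D$ with $\gamma^{\mathrm{p}}(0)\in X^{(0)},\gamma^{\mathrm{p}}(1)\in X^{(1)}$; $\beta^{\mathrm{p}}(t_n)=(\gamma^{\mathrm{p}}(t_{n+1})-\gamma^{\mathrm{p}}(t_n))/h$; linear interpolation $\gamma^{\mathrm{pl}}(t_n+s)=(1-Ns)\gamma^{\mathrm{p}}(t_n)+Ns\gamma^{\mathrm{p}}(t_{n+1})$, $0\le s\le h$; $\mathcal{E}^g_{\mathrm{tra},N}(\gamma^{\mathrm{p}})=\frac1N\sum_{n=0}^{N-1}g_{(\gamma^{\mathrm{p}}(t_n)+\gamma^{\mathrm{p}}(t_{n+1}))/2}(\beta^{\mathrm{p}}(t_n),\beta^{\mathrm{p}}(t_n))$.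 *)

theory Defs
  imports "HOL-Analysis.Analysis"
begin

definition gmet :: "(real^'n \<Rightarrow> real^'n^'n) \<Rightarrow> real^'n \<Rightarrow> real^'n \<Rightarrow> real^'n \<Rightarrow> real" where
  "gmet H x u v = u \<bullet> (H x *v v)"

text \<open>C-infinity real functions on R^D: continuous, and every partial derivative
  exists everywhere and is again C-infinity (greatest fixed point).\<close>
coinductive smooth_fun :: "(real^'n \<Rightarrow> real) \<Rightarrow> bool" where
  "continuous_on UNIV f \<Longrightarrow>
   (\<And>i. \<exists>f'. (\<forall>x. ((\<lambda>t. f (x + t *\<^sub>R axis i 1)) has_real_derivative f' x) (at 0))
              \<and> smooth_fun f') \<Longrightarrow> smooth_fun f"

definition smooth_metric :: "(real^'n \<Rightarrow> real^'n^'n) \<Rightarrow> bool" where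
  "smooth_metric H \<longleftrightarrow> (\<forall>i j. smooth_fun (\<lambda>x. H x $ i $ j)) \<and> (\<forall>x. transpose (H x) = H x)"

definition pw_C1 :: "(real \<Rightarrow> 'a::real_normed_vector) \<Rightarrow> bool" where
  "pw_C1 \<gamma> \<longleftrightarrow> continuous_on {0..1} \<gamma> \<and>
     (\<exists>S. finite S \<and> {0,1} \<subseteq> S \<and> S \<subseteq> {0..1} \<and>
        (\<forall>a\<in>S. \<forall>b\<in>S. a < b \<and> {a<..<b} \<inter> S = {} \<longrightarrow>
           (\<exists>\<gamma>'. continuous_on {a..b} \<gamma>' \<and>
              (\<forall>t\<in>{a..b}. (\<gamma> has_vector_derivative \<gamma>' t) (at t within {a..b})))))"

definition curve_length :: "(real^'n \<Rightarrow> real^'n^'n) \<Rightarrow> (real \<Rightarrow> real^'n) \<Rightarrow> real" where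
  "curve_length H \<gamma> = integral {0..1} (\<lambda>t. let v = vector_derivative \<gamma> (at t within {0..1})
                                          in sqrt (gmet H (\<gamma> t) v v))"

definition gdist :: "(real^'n \<Rightarrow> real^'n^'n) \<Rightarrow> real^'n \<Rightarrow> real^'n \<Rightarrow> real" where
  "gdist H x y = Inf {curve_length H \<gamma> | \<gamma>. pw_C1 \<gamma> \<and> \<gamma> 0 = x \<and> \<gamma> 1 = y}"

definition gsetdist :: "(real^'n \<Rightarrow> real^'n^'n) \<Rightarrow> (real^'n) set \<Rightarrow> (real^'n) set \<Rightarrow> real" where
  "gsetdist H A B = Inf {gdist H x y | x y. x \<in> A \<and> y \<in> B}"

text \<open>Discrete curves: p n = gamma^p(t_n), n = 0..N. Trapezoidal/midpoint energy.\<close>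
definition E_tra :: "(real^'n \<Rightarrow> real^'n^'n) \<Rightarrow> nat \<Rightarrow> (nat \<Rightarrow> real^'n) \<Rightarrow> real" where
  "E_tra H N p = (1 / real N) * (\<Sum>n<N.
      let \<beta> = real N *\<^sub>R (p (Suc n) - p n)
      in gmet H ((1/2) *\<^sub>R (p n + p (Suc n))) \<beta> \<beta>)"

definition lin_interp :: "nat \<Rightarrow> (nat \<Rightarrow> real^'n) \<Rightarrow> real \<Rightarrow> real^'n" where
  "lin_interp N p t = (let n = min (nat \<lfloor>real N * t\<rfloor>) (N - 1); s = real N * t - real n
                       in (1 - s) *\<^sub>R p n + s *\<^sub>R p (Suc n))"

end

theory Submission
  imports Defs
begin

text \<open>
  Sampling an admissible curve of length \<open>L\<close> at \<open>N + 1\<close> points that cut it into arcs of length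
  \<open>L / N\<close> gives a discrete path of energy at most \<open>L\<^sup>2 + O(L\<^sup>3 / N)\<close>: each arc stays within
  \<open>O(L / N)\<close> of the midpoint of its chord, where by the Lipschitz bound the metric differs from the
  metric along the arc by a factor \<open>1 + O(L / N)\<close>, and Cauchy-Schwarz for the metric frozen at the
  midpoint bounds the chord by the arc. Conversely, a minimising discrete path has energy at most
  that of a straight segment from \<open>X0\<close> to \<open>X1\<close>, hence steps of size \<open>O(N^(-1/2))\<close>; along each
  segment of its linear interpolant the metric is within a factor \<open>1 + O(N^(-1/2))\<close> of its value
  at the midpoint of the segment, and Cauchy-Schwarz over the segments bounds the squared length of
  the interpolant by \<open>(1 + O(N^(-1/2)))\<close> times the energy.
\<close>

section \<open>Uniformly elliptic, Lipschitz metric fields\<close>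

lemma gmet_scaleR: "gmet H x (c *\<^sub>R u) (c *\<^sub>R u) = c\<^sup>2 * gmet H x u u"
  by (simp add: gmet_def matrix_vector_mult_scaleR power2_eq_square)

lemma gmet_uminus: "gmet H x (- u) (- u) = gmet H x u u"
  by (simp add: gmet_def vec.neg)

lemma gmet_eq_sum: "gmet H x u v = (\<Sum>i\<in>UNIV. \<Sum>j\<in>UNIV. u $ i * H x $ i $ j * v $ j)"
  by (simp add: gmet_def inner_vec_def matrix_vector_mult_def sum_distrib_left mult.assoc)

lemma bounded_linear_gmet_right: "bounded_linear (gmet H x u)"
  unfolding gmet_def by (intro bounded_linear_inner_right_comp matrix_vector_mul_bounded_linear)

lemma gmet_diff_base: "gmet H x u u - gmet H y u u = u \<bullet> ((H x - H y) *v u)"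
  by (simp add: gmet_def matrix_vector_mult_diff_rdistrib inner_diff_right)

lemma factor_excess_le:
  fixes X s c1 LH \<delta> :: real
  assumes "0 < c1" "0 \<le> LH" "0 \<le> X" "0 < s" "\<delta> \<le> sqrt (X / c1) / (2 * s)"
  shows "(1 + LH * \<delta> / c1) * X \<le> X + LH / 2 * sqrt (X / c1) ^ 3 / s"
proof -
  have "\<delta> * (X / c1) \<le> sqrt (X / c1) / (2 * s) * (X / c1)"
    using assms by (intro mult_right_mono) auto
  also have "\<dots> = sqrt (X / c1) ^ 3 / (2 * s)"
    using assms by (simp add: power3_eq_cube mult_ac)
  finally have "LH * (\<delta> * (X / c1)) \<le> LH * (sqrt (X / c1) ^ 3 / (2 * s))"
    using assms(2) by (rule mult_left_mono)
  then show ?thesis using assms(1) by (simp add: field_simps)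
qed

locale elliptic_lipschitz_metric =
  fixes H :: "real^'n \<Rightarrow> real^'n^'n" and c1 c2 LH :: real
  assumes symmetric: "transpose (H x) = H x"
    and lower_bound: "c1 * (norm u)\<^sup>2 \<le> gmet H x u u"
    and upper_bound: "gmet H x u u \<le> c2 * (norm u)\<^sup>2"
    and lipschitz: "onorm (\<lambda>v. (H x - H y) *v v) \<le> LH * dist x y"
    and c1_pos: "0 < c1"
    and LH_nonneg: "0 \<le> LH"
begin

lemma gmet_nonneg: "0 \<le> gmet H x u u"
  using lower_bound[of u x] c1_pos by (meson order_trans mult_nonneg_nonneg less_imp_le zero_le_power2)

lemma gmet_commute: "gmet H x u v = gmet H x v u"
proof -
  have "gmet H x u v = (transpose (H x) *v u) \<bullet> v"
    by (simp add: gmet_def dot_lmul_matrix transpose_matrix_vector)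
  then show ?thesis by (simp add: symmetric gmet_def inner_commute)
qed

lemma gmet_Cauchy_Schwarz: "(gmet H x u v)\<^sup>2 \<le> gmet H x u u * gmet H x v v"
proof (cases "v = 0")
  case True
  then show ?thesis by (simp add: gmet_def)
next
  case False
  define a b c where "a = gmet H x v v" and "b = gmet H x u v" and "c = gmet H x u u"
  have "0 < c1 * (norm v)\<^sup>2" using False c1_pos by simp
  then have a: "0 < a" using lower_bound[of v x] unfolding a_def by linarith
  have "0 \<le> gmet H x (u - (b / a) *\<^sub>R v) (u - (b / a) *\<^sub>R v)" by (rule gmet_nonneg)
  also have "\<dots> = c - b\<^sup>2 / a"
    using a gmet_commute[of x v u]
    by (simp add: gmet_def a_def b_def c_def inner_diff_left inner_diff_right
        matrix_vector_mult_diff_distrib matrix_vector_mult_scaleR power2_eq_square field_simps)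
  finally show ?thesis using a by (simp add: a_def b_def c_def field_simps)
qed

lemma norm_le_gmet: "norm u \<le> sqrt (gmet H x u u) / sqrt c1"
proof -
  have "sqrt c1 * norm u = sqrt (c1 * (norm u)\<^sup>2)" by (simp add: real_sqrt_mult)
  also have "\<dots> \<le> sqrt (gmet H x u u)" using lower_bound by simp
  finally show ?thesis using c1_pos by (simp add: field_simps)
qed

lemma gmet_diff_le: "gmet H x u u - gmet H y u u \<le> LH * dist x y * (norm u)\<^sup>2"
proof -
  have "gmet H x u u - gmet H y u u \<le> norm u * norm ((H x - H y) *v u)"
    unfolding gmet_diff_base by (rule norm_cauchy_schwarz)
  also have "\<dots> \<le> norm u * (LH * dist x y * norm u)"
    using onorm[OF matrix_vector_mul_bounded_linear, of "H x - H y" u] lipschitz[of x y]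
    by (intro mult_left_mono; meson mult_right_mono norm_ge_zero order_trans)
  also have "\<dots> = LH * dist x y * (norm u)\<^sup>2" by (simp add: power2_eq_square mult_ac)
  finally show ?thesis .
qed

lemma gmet_le_shift:
  assumes "dist x y \<le> \<delta>"
  shows "gmet H x u u \<le> (1 + LH * \<delta> / c1) * gmet H y u u"
proof -
  have "LH * dist x y * (norm u)\<^sup>2 \<le> LH * \<delta> * (gmet H y u u / c1)"
    using lower_bound[of u y] c1_pos LH_nonneg assms order_trans[OF zero_le_dist assms]
    by (intro mult_mono) (auto simp: field_simps mult_left_mono)
  with gmet_diff_le[of x u y]
  have "gmet H x u u \<le> gmet H y u u + LH * \<delta> * (gmet H y u u / c1)" by linarith
  then show ?thesis using c1_pos by (simp add: field_simps)
qed

lemma gmet_segment_le_midpoint: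
  assumes "0 \<le> \<sigma>" "\<sigma> \<le> 1"
  shows "gmet H (x + \<sigma> *\<^sub>R (y - x)) (y - x) (y - x)
    \<le> (1 + LH * (norm (y - x) / 2) / c1) * gmet H (midpoint x y) (y - x) (y - x)"
proof (rule gmet_le_shift)
  have "x + \<sigma> *\<^sub>R (y - x) - midpoint x y = (\<sigma> - 1/2) *\<^sub>R (y - x)"
    by (simp add: midpoint_def algebra_simps vec_eq_iff)
  then have "dist (x + \<sigma> *\<^sub>R (y - x)) (midpoint x y) = \<bar>\<sigma> - 1/2\<bar> * norm (y - x)"
    by (simp add: dist_norm)
  also have "\<dots> \<le> 1/2 * norm (y - x)"
  proof (rule mult_right_mono)
    show "\<bar>\<sigma> - 1/2\<bar> \<le> 1/2" using assms by linarith
  qed simp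
  finally show "dist (x + \<sigma> *\<^sub>R (y - x)) (midpoint x y) \<le> norm (y - x) / 2" by simp
qed

lemma continuous_on_entry: "continuous_on UNIV (\<lambda>x. H x $ i $ j)"
proof (rule lipschitz_on_continuous_on)
  show "LH-lipschitz_on UNIV (\<lambda>x. H x $ i $ j)"
  proof (rule lipschitz_onI)
    fix x y
    have "dist (H x $ i $ j) (H y $ i $ j) = \<bar>((H x - H y) *v axis j 1) $ i\<bar>"
      by (simp add: matrix_vector_mult_basis column_def dist_real_def)
    also have "\<dots> \<le> norm ((H x - H y) *v axis j 1)" by (rule component_le_norm_cart)
    also have "\<dots> \<le> onorm (\<lambda>v. (H x - H y) *v v)"
      using onorm[OF matrix_vector_mul_bounded_linear, of "H x - H y" "axis j 1"] by simp
    also have "\<dots> \<le> LH * dist x y" by (rule lipschitz)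
    finally show "dist (H x $ i $ j) (H y $ i $ j) \<le> LH * dist x y" .
  qed (rule LH_nonneg)
qed

lemma continuous_on_gmet_norm: "continuous_on UNIV (\<lambda>z. sqrt (gmet H (fst z) (snd z) (snd z)))"
proof -
  have entries: "continuous_on UNIV (\<lambda>z. H (fst z) $ i $ j)" for i j
    by (rule continuous_on_compose2[OF continuous_on_entry continuous_on_fst[OF continuous_on_id]]) simp
  have coordinates: "continuous_on UNIV (\<lambda>z::(real^'n) \<times> (real^'n). snd z $ i)" for i
    by (intro continuous_on_component continuous_on_snd continuous_on_id)
  show ?thesis
    unfolding gmet_eq_sum
    by (intro continuous_on_real_sqrt continuous_on_sum continuous_on_mult entries coordinates)
qed

end

section \<open>Piecewise \<open>C\<^sup>1\<close> curves\<close>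

definition velocity :: "(real \<Rightarrow> 'a::real_normed_vector) \<Rightarrow> real \<Rightarrow> 'a" where
  "velocity \<gamma> t = vector_derivative \<gamma> (at t within {0..1})"

lemma pw_C1_continuous_on: "pw_C1 \<gamma> \<Longrightarrow> continuous_on {0..1} \<gamma>"
  by (simp add: pw_C1_def)

lemma velocity_eqI:
  assumes "(\<gamma> has_vector_derivative v) (at t)" "0 < t" "t < 1"
  shows "velocity \<gamma> t = v"
proof -
  have "at t within {0..1} = at t" using assms by (intro at_within_Icc_at) auto
  then show ?thesis using assms(1) by (simp add: velocity_def vector_derivative_at)
qed

lemma pw_C1_pieces:
  assumes "pw_C1 \<gamma>"
  obtains S where "finite S"
    "\<And>u w. 0 \<le> u \<Longrightarrow> u < w \<Longrightarrow> w \<le> 1 \<Longrightarrow> {u<..<w} \<inter> S = {} \<Longrightarrow>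
       \<exists>\<gamma>'. continuous_on {u..w} \<gamma>' \<and> (\<forall>t\<in>{u<..<w}. (\<gamma> has_vector_derivative \<gamma>' t) (at t))"
proof -
  obtain S where S: "finite S" "{0,1} \<subseteq> S" "S \<subseteq> {0..1}"
    and piece: "\<forall>a\<in>S. \<forall>b\<in>S. a < b \<and> {a<..<b} \<inter> S = {} \<longrightarrow>
      (\<exists>\<gamma>'. continuous_on {a..b} \<gamma>' \<and>
        (\<forall>t\<in>{a..b}. (\<gamma> has_vector_derivative \<gamma>' t) (at t within {a..b})))"
    using assms unfolding pw_C1_def by blast
  have "\<exists>\<gamma>'. continuous_on {u..w} \<gamma>' \<and> (\<forall>t\<in>{u<..<w}. (\<gamma> has_vector_derivative \<gamma>' t) (at t))"
    if uw: "0 \<le> u" "u < w" "w \<le> 1" "{u<..<w} \<inter> S = {}" for u w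
  proof -
    define a b where "a = Max {s\<in>S. s \<le> u}" and "b = Min {s\<in>S. w \<le> s}"
    have "a \<in> {s\<in>S. s \<le> u}" "b \<in> {s\<in>S. w \<le> s}"
      unfolding a_def b_def using S uw by (intro Max_in Min_in; force)+
    moreover have "s \<le> a" if "s \<in> S" "s \<le> u" for s
      unfolding a_def using S(1) that by (intro Max_ge) auto
    moreover have "b \<le> s" if "s \<in> S" "w \<le> s" for s
      unfolding b_def using S(1) that by (intro Min_le) auto
    ultimately have a: "a \<in> S" "a \<le> u" "\<And>s. s \<in> S \<Longrightarrow> s \<le> u \<Longrightarrow> s \<le> a"
      and b: "b \<in> S" "w \<le> b" "\<And>s. s \<in> S \<Longrightarrow> w \<le> s \<Longrightarrow> b \<le> s"
      by auto
    have "s \<notin> S" if "a < s" "s < b" for s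
    proof
      assume "s \<in> S"
      then have "u < s" "s < w" using a(3) b(3) that by force+
      with \<open>s \<in> S\<close> uw(4) show False by auto
    qed
    then have "{a<..<b} \<inter> S = {}" by auto
    moreover have "a < b" using a(2) b(2) uw(2) by linarith
    ultimately obtain \<gamma>' where \<gamma>': "continuous_on {a..b} \<gamma>'"
      "\<And>t. t \<in> {a..b} \<Longrightarrow> (\<gamma> has_vector_derivative \<gamma>' t) (at t within {a..b})"
      using piece a(1) b(1) by blast
    have "(\<gamma> has_vector_derivative \<gamma>' t) (at t)" if "t \<in> {u<..<w}" for t
      using \<gamma>'(2)[of t] at_within_Icc_at[of a t b] that a(2) b(2) by auto
    moreover have "continuous_on {u..w} \<gamma>'"
      by (rule continuous_on_subset[OF \<gamma>'(1)]) (use a(2) b(2) in auto)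
    ultimately show ?thesis by blast
  qed
  with S(1) that show thesis by blast
qed

lemma pw_C1_has_velocity:
  assumes "pw_C1 \<gamma>"
  obtains S where "finite S"
    "\<And>t. t \<in> {0<..<1} - S \<Longrightarrow> (\<gamma> has_vector_derivative velocity \<gamma> t) (at t)"
proof -
  obtain S where S: "finite S"
    and pieces: "\<And>u w. 0 \<le> u \<Longrightarrow> u < w \<Longrightarrow> w \<le> 1 \<Longrightarrow> {u<..<w} \<inter> S = {} \<Longrightarrow>
       \<exists>\<gamma>'. continuous_on {u..w} \<gamma>' \<and> (\<forall>t\<in>{u<..<w}. (\<gamma> has_vector_derivative \<gamma>' t) (at t))"
    using pw_C1_pieces[OF assms] by blast
  have "(\<gamma> has_vector_derivative velocity \<gamma> t) (at t)" if t: "t \<in> {0<..<1} - S" for t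
  proof -
    obtain \<delta> where \<delta>: "\<delta> > 0" "\<And>s. s \<in> S \<Longrightarrow> s \<noteq> t \<Longrightarrow> \<delta> \<le> dist t s"
      using finite_set_avoid[OF S] by blast
    define u w where "u = max 0 (t - \<delta>)" and "w = min 1 (t + \<delta>)"
    have "s \<notin> S" if "u < s" "s < w" for s
    proof
      assume "s \<in> S"
      moreover have "dist t s < \<delta>" using that by (auto simp: u_def w_def dist_real_def)
      ultimately have "s = t" using \<delta>(2) by force
      with \<open>s \<in> S\<close> t show False by simp
    qed
    then have "{u<..<w} \<inter> S = {}" by auto
    moreover have "0 \<le> u" "u < w" "w \<le> 1" using t \<delta>(1) by (auto simp: u_def w_def)
    ultimately obtain \<gamma>' where "\<And>s. s \<in> {u<..<w} \<Longrightarrow> (\<gamma> has_vector_derivative \<gamma>' s) (at s)"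
      using pieces by blast
    moreover have "t \<in> {u<..<w}" using t \<delta>(1) by (auto simp: u_def w_def)
    ultimately show ?thesis using velocity_eqI t by fastforce
  qed
  with S that show thesis by blast
qed

lemma pw_C1_velocity_has_integral:
  fixes \<gamma> :: "real \<Rightarrow> 'a::banach"
  assumes "pw_C1 \<gamma>" "0 \<le> a" "a \<le> b" "b \<le> 1"
  shows "(velocity \<gamma> has_integral \<gamma> b - \<gamma> a) {a..b}"
proof -
  obtain S where "finite S"
    and S: "\<And>t. t \<in> {0<..<1} - S \<Longrightarrow> (\<gamma> has_vector_derivative velocity \<gamma> t) (at t)"
    using pw_C1_has_velocity[OF assms(1)] by blast
  moreover have "continuous_on {a..b} \<gamma>"
    by (rule continuous_on_subset[OF pw_C1_continuous_on[OF assms(1)]]) (use assms in auto)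
  ultimately show ?thesis
    using assms(2-4) by (intro fundamental_theorem_of_calculus_interior_strong[of S]) auto
qed

lemma pw_C1_integrable_comp_velocity:
  fixes \<Phi> :: "'a::real_normed_vector \<Rightarrow> 'a \<Rightarrow> 'b::banach"
  assumes "pw_C1 \<gamma>" and \<Phi>: "continuous_on UNIV (\<lambda>z. \<Phi> (fst z) (snd z))"
  shows "(\<lambda>t. \<Phi> (\<gamma> t) (velocity \<gamma> t)) integrable_on {0..1}"
proof -
  let ?f = "\<lambda>t. \<Phi> (\<gamma> t) (velocity \<gamma> t)"
  obtain S where S: "finite S"
    and pieces: "\<And>u w. 0 \<le> u \<Longrightarrow> u < w \<Longrightarrow> w \<le> 1 \<Longrightarrow> {u<..<w} \<inter> S = {} \<Longrightarrow>
       \<exists>\<gamma>'. continuous_on {u..w} \<gamma>' \<and> (\<forall>t\<in>{u<..<w}. (\<gamma> has_vector_derivative \<gamma>' t) (at t))"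
    using pw_C1_pieces[OF assms(1)] by blast
  have piece_integrable: "?f integrable_on {u..w}"
    if uw: "0 \<le> u" "u \<le> w" "w \<le> 1" "{u<..<w} \<inter> S = {}" for u w
  proof (cases "u = w")
    case True
    then show ?thesis using integrable_on_refl[of _ w] by (simp add: cbox_interval)
  next
    case False
    with uw obtain \<gamma>' where \<gamma>': "continuous_on {u..w} \<gamma>'"
      "\<And>t. t \<in> {u<..<w} \<Longrightarrow> (\<gamma> has_vector_derivative \<gamma>' t) (at t)"
      using pieces[of u w] by auto
    have "continuous_on {u..w} \<gamma>"
      by (rule continuous_on_subset[OF pw_C1_continuous_on[OF assms(1)]]) (use uw in auto)
    then have "continuous_on {u..w} (\<lambda>t. (\<gamma> t, \<gamma>' t))"
      by (intro continuous_on_Pair \<gamma>'(1))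
    from continuous_on_compose2[OF \<Phi> this]
    have "(\<lambda>t. \<Phi> (\<gamma> t) (\<gamma>' t)) integrable_on {u..w}"
      by (intro integrable_continuous_interval) simp
    moreover have "?f t = \<Phi> (\<gamma> t) (\<gamma>' t)" if "t \<in> {u..w} - {u, w}" for t
    proof -
      have "t \<in> {u<..<w}" using that by auto
      then have "velocity \<gamma> t = \<gamma>' t" by (intro velocity_eqI \<gamma>'(2)) (use uw in auto)
      then show ?thesis by simp
    qed
    ultimately show ?thesis
      using integrable_spike_finite[of "{u, w}" "{u..w}" ?f "\<lambda>t. \<Phi> (\<gamma> t) (\<gamma>' t)"] by blast
  qed
  show ?thesis
    unfolding cbox_interval[symmetric]
  proof (rule integrable_on_little_subintervals, intro ballI)
    fix x :: real assume "x \<in> cbox 0 1"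
    obtain \<delta> where \<delta>: "\<delta> > 0" "\<And>s. s \<in> S \<Longrightarrow> s \<noteq> x \<Longrightarrow> \<delta> \<le> dist x s"
      using finite_set_avoid[OF S] by blast
    have "?f integrable_on {u..v}" if "x \<in> {u..v}" "{u..v} \<subseteq> ball x \<delta>" "{u..v} \<subseteq> {0..1}" for u v
    proof -
      have "s \<notin> S" if "s \<in> {u..v}" "s \<noteq> x" for s
      proof
        assume "s \<in> S"
        with \<delta>(2) \<open>s \<noteq> x\<close> have "\<delta> \<le> dist x s" by blast
        moreover have "dist x s < \<delta>" using \<open>{u..v} \<subseteq> ball x \<delta>\<close> \<open>s \<in> {u..v}\<close> by auto
        ultimately show False by simp
      qed
      then have "{u<..<x} \<inter> S = {}" "{x<..<v} \<inter> S = {}"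
        using \<open>x \<in> {u..v}\<close> by auto
      moreover have "0 \<le> u" "v \<le> 1" "u \<le> x" "x \<le> v" using that by auto
      ultimately show ?thesis
        using piece_integrable[of u x] piece_integrable[of x v]
          Henstock_Kurzweil_Integration.integrable_combine[of u x v ?f]
        by linarith
    qed
    then show "\<exists>d>0. \<forall>u v. x \<in> cbox u v \<and> cbox u v \<subseteq> ball x d \<and> cbox u v \<subseteq> cbox 0 1 \<longrightarrow>
        ?f integrable_on cbox u v"
      using \<delta>(1) by (auto simp: cbox_interval)
  qed
qed

lemma pw_C1_linepath: "pw_C1 (linepath x y)"
  unfolding pw_C1_def
  by (intro conjI exI[of _ "{0, 1}"] ballI impI exI[of _ "\<lambda>_. y - x"]
      continuous_on_linepath has_vector_derivative_linepath_within) auto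

section \<open>Length and energy of curves\<close>

definition speed :: "(real^'n \<Rightarrow> real^'n^'n) \<Rightarrow> (real \<Rightarrow> real^'n) \<Rightarrow> real \<Rightarrow> real" where
  "speed H \<gamma> t = sqrt (gmet H (\<gamma> t) (velocity \<gamma> t) (velocity \<gamma> t))"

lemma curve_length_eq_integral_speed: "curve_length H \<gamma> = integral {0..1} (speed H \<gamma>)"
  by (simp add: curve_length_def speed_def[abs_def] velocity_def Let_def)

lemma E_tra_eq_sum_midpoint:
  "E_tra H N q = real N * (\<Sum>n<N. gmet H (midpoint (q n) (q (Suc n))) (q (Suc n) - q n) (q (Suc n) - q n))"
  by (cases "N = 0")
    (simp_all add: E_tra_def gmet_scaleR midpoint_def sum_distrib_left[symmetric] power2_eq_square)

context elliptic_lipschitz_metric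
begin

lemma speed_nonneg: "0 \<le> speed H \<gamma> t"
  by (simp add: speed_def gmet_nonneg)

lemma speed_integrable:
  assumes "pw_C1 \<gamma>" "0 \<le> a" "a \<le> b" "b \<le> 1"
  shows "speed H \<gamma> integrable_on {a..b}"
proof -
  have "speed H \<gamma> integrable_on {0..1}"
    using pw_C1_integrable_comp_velocity[OF assms(1) continuous_on_gmet_norm] by (simp add: speed_def[abs_def])
  then show ?thesis by (rule integrable_subinterval_real) (use assms in auto)
qed

lemma arc_length_nonneg:
  assumes "pw_C1 \<gamma>" "0 \<le> a" "a \<le> b" "b \<le> 1"
  shows "0 \<le> integral {a..b} (speed H \<gamma>)"
  using speed_integrable[OF assms] speed_nonneg by (rule Henstock_Kurzweil_Integration.integral_nonneg)

lemma curve_length_nonneg: "pw_C1 \<gamma> \<Longrightarrow> 0 \<le> curve_length H \<gamma>"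
  using arc_length_nonneg[of \<gamma> 0 1] by (simp add: curve_length_eq_integral_speed)

lemma arc_length_add:
  assumes "pw_C1 \<gamma>" "0 \<le> a" "a \<le> c" "c \<le> b" "b \<le> 1"
  shows "integral {a..c} (speed H \<gamma>) + integral {c..b} (speed H \<gamma>) = integral {a..b} (speed H \<gamma>)"
  using assms by (intro Henstock_Kurzweil_Integration.integral_combine speed_integrable) auto

lemma norm_diff_le_arc_length:
  assumes "pw_C1 \<gamma>" "0 \<le> a" "a \<le> b" "b \<le> 1"
  shows "norm (\<gamma> b - \<gamma> a) \<le> integral {a..b} (speed H \<gamma>) / sqrt c1"
proof -
  have velocity: "(velocity \<gamma> has_integral \<gamma> b - \<gamma> a) {a..b}"
    by (rule pw_C1_velocity_has_integral[OF assms])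
  have "norm (velocity \<gamma> t) \<le> speed H \<gamma> t / sqrt c1" for t
    unfolding speed_def by (rule norm_le_gmet)
  then have "norm (integral {a..b} (velocity \<gamma>)) \<le> integral {a..b} (\<lambda>t. speed H \<gamma> t / sqrt c1)"
    using velocity speed_integrable[OF assms]
    by (intro Henstock_Kurzweil_Integration.integral_norm_bound_integral integrable_on_divide) auto
  with velocity show ?thesis by (simp add: integral_unique)
qed

lemma chord_energy_le:
  assumes \<gamma>: "pw_C1 \<gamma>" and ab: "0 \<le> a" "a \<le> b" "b \<le> 1"
    and near: "\<And>t. t \<in> {a..b} \<Longrightarrow> dist m (\<gamma> t) \<le> \<delta>"
  shows "gmet H m (\<gamma> b - \<gamma> a) (\<gamma> b - \<gamma> a) \<le> (1 + LH * \<delta> / c1) * (integral {a..b} (speed H \<gamma>))\<^sup>2"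
proof -
  define D Q K l where "D = \<gamma> b - \<gamma> a" and "Q = gmet H m D D" and "K = 1 + LH * \<delta> / c1"
    and "l = integral {a..b} (speed H \<gamma>)"
  have "0 \<le> \<delta>" using order_trans[OF zero_le_dist near[of a]] ab by auto
  then have K: "1 \<le> K" using c1_pos LH_nonneg by (simp add: K_def)
  have Q: "0 \<le> Q" unfolding Q_def by (rule gmet_nonneg)
  have l: "0 \<le> l" unfolding l_def by (rule arc_length_nonneg[OF \<gamma> ab])
  from has_integral_linear[OF pw_C1_velocity_has_integral[OF \<gamma> ab] bounded_linear_gmet_right]
  have Q_integral: "((\<lambda>t. gmet H m D (velocity \<gamma> t)) has_integral Q) {a..b}"
    by (simp add: o_def Q_def D_def)
  have pointwise: "gmet H m D (velocity \<gamma> t) \<le> sqrt Q * sqrt K * speed H \<gamma> t" if "t \<in> {a..b}" for t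
  proof -
    let ?v = "velocity \<gamma> t"
    have "gmet H m D ?v \<le> sqrt (Q * gmet H m ?v ?v)"
      using gmet_Cauchy_Schwarz[of m D ?v] unfolding Q_def by (rule real_le_rsqrt)
    also have "\<dots> \<le> sqrt (Q * (K * gmet H (\<gamma> t) ?v ?v))"
      using gmet_le_shift[OF near[OF that]] Q by (simp add: K_def mult_left_mono)
    also have "\<dots> = sqrt Q * sqrt K * speed H \<gamma> t" by (simp add: speed_def real_sqrt_mult)
    finally show ?thesis .
  qed
  have "Q \<le> sqrt Q * sqrt K * l"
    using has_integral_le[OF Q_integral has_integral_mult_right[OF integrable_integral] pointwise]
      speed_integrable[OF \<gamma> ab] by (simp add: l_def)
  have "sqrt Q \<le> sqrt K * l"
  proof (cases "Q = 0")
    case False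
    with Q have "sqrt Q = Q / sqrt Q" by (simp add: real_div_sqrt)
    also have "\<dots> \<le> sqrt K * l"
      using False Q \<open>Q \<le> sqrt Q * sqrt K * l\<close> by (simp add: pos_divide_le_eq mult_ac)
    finally show ?thesis .
  qed (use K l in simp)
  then have "(sqrt Q)\<^sup>2 \<le> (sqrt K * l)\<^sup>2" by (rule power_mono) (use Q in simp)
  then show ?thesis using Q K by (simp add: Q_def D_def K_def l_def power_mult_distrib)
qed

lemma midpoint_chord_energy_le:
  assumes \<gamma>: "pw_C1 \<gamma>" and ab: "0 \<le> a" "a \<le> b" "b \<le> 1"
  defines "l \<equiv> integral {a..b} (speed H \<gamma>)"
  shows "gmet H (midpoint (\<gamma> a) (\<gamma> b)) (\<gamma> b - \<gamma> a) (\<gamma> b - \<gamma> a)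
    \<le> (1 + LH * (l / (2 * sqrt c1)) / c1) * l\<^sup>2"
  unfolding l_def
proof (rule chord_energy_le[OF assms(1-4)])
  fix t assume t: "t \<in> {a..b}"
  have "midpoint (\<gamma> a) (\<gamma> b) - \<gamma> t = (1/2) *\<^sub>R (\<gamma> b - \<gamma> t) - (1/2) *\<^sub>R (\<gamma> t - \<gamma> a)"
    by (simp add: midpoint_def vec_eq_iff algebra_simps)
  then have "dist (midpoint (\<gamma> a) (\<gamma> b)) (\<gamma> t) \<le> (norm (\<gamma> t - \<gamma> a) + norm (\<gamma> b - \<gamma> t)) / 2"
    using norm_triangle_ineq4[of "(1/2) *\<^sub>R (\<gamma> b - \<gamma> t)" "(1/2) *\<^sub>R (\<gamma> t - \<gamma> a)"]
    by (simp add: dist_norm)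
  also have "\<dots> \<le> (integral {a..t} (speed H \<gamma>) / sqrt c1 + integral {t..b} (speed H \<gamma>) / sqrt c1) / 2"
    using t ab by (intro divide_right_mono add_mono norm_diff_le_arc_length[OF \<gamma>]) auto
  also have "\<dots> = integral {a..b} (speed H \<gamma>) / (2 * sqrt c1)"
    using arc_length_add[OF \<gamma>, of a t b] t ab c1_pos by (simp add: field_simps)
  finally show "dist (midpoint (\<gamma> a) (\<gamma> b)) (\<gamma> t) \<le> integral {a..b} (speed H \<gamma>) / (2 * sqrt c1)" .
qed

lemma arc_length_grid:
  assumes \<gamma>: "pw_C1 \<gamma>" and N: "N \<ge> 1"
  obtains \<tau> where "\<tau> 0 = 0" "\<tau> N = 1"
    "\<And>n. n \<le> N \<Longrightarrow> \<tau> n \<in> {0..1} \<and>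
       integral {0..\<tau> n} (speed H \<gamma>) = real n / real N * curve_length H \<gamma>"
proof -
  define L where "L = curve_length H \<gamma>"
  define s where "s t = integral {0..t} (speed H \<gamma>)" for t
  have s_cont: "continuous_on {0..1} s"
    unfolding s_def by (rule indefinite_integral_continuous_1[OF speed_integrable[OF \<gamma>]]) auto
  have s01: "s 0 = 0" "s 1 = L" by (simp_all add: s_def L_def curve_length_eq_integral_speed)
  have L: "0 \<le> L" unfolding L_def by (rule curve_length_nonneg[OF \<gamma>])
  have "\<exists>t. (n \<le> N \<longrightarrow> t \<in> {0..1} \<and> s t = real n / real N * L) \<and> (n = 0 \<longrightarrow> t = 0) \<and> (n = N \<longrightarrow> t = 1)"
    for n
  proof -
    consider "n = 0" | "n = N" | "0 < n" "n < N" | "N < n" by linarith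
    then show ?thesis
    proof cases
      case 3
      have "real n / real N \<le> 1" using 3 by simp
      then have "real n / real N * L \<le> L" using mult_left_le_one_le[OF L, of "real n / real N"] by simp
      moreover have "0 \<le> real n / real N * L" using L by simp
      ultimately obtain t where "0 \<le> t" "t \<le> 1" "s t = real n / real N * L"
        using IVT'[of s 0 _ 1] s_cont s01 by auto
      with 3 show ?thesis by auto
    qed (use s01 N in auto)
  qed
  then obtain \<tau> where \<tau>: "\<And>n. (n \<le> N \<longrightarrow> \<tau> n \<in> {0..1} \<and> s (\<tau> n) = real n / real N * L) \<and>
      (n = 0 \<longrightarrow> \<tau> n = 0) \<and> (n = N \<longrightarrow> \<tau> n = 1)"
    by metis
  show thesis
  proof (rule that)
    show "\<tau> 0 = 0" "\<tau> N = 1" using \<tau>[of 0] \<tau>[of N] by auto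
  next
    fix n assume "n \<le> N"
    then show "\<tau> n \<in> {0..1} \<and> integral {0..\<tau> n} (speed H \<gamma>) = real n / real N * curve_length H \<gamma>"
      using \<tau>[of n] by (simp add: s_def L_def)
  qed
qed

lemma arc_length_between_samples:
  assumes \<gamma>: "pw_C1 \<gamma>" and s: "s \<in> {0..1}" "t \<in> {0..1}"
    and "integral {0..s} (speed H \<gamma>) = real n / real N * curve_length H \<gamma>"
    and "integral {0..t} (speed H \<gamma>) = real (Suc n) / real N * curve_length H \<gamma>"
  shows "integral {min s t..max s t} (speed H \<gamma>) = curve_length H \<gamma> / real N"
proof -
  have split: "integral {0..min s t} (speed H \<gamma>) + integral {min s t..max s t} (speed H \<gamma>)
      = integral {0..max s t} (speed H \<gamma>)"
    using arc_length_add[OF \<gamma>, of 0 "min s t" "max s t"] s by simp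
  show ?thesis
  proof (cases "s \<le> t")
    case True
    then show ?thesis using split assms(4,5) by (simp add: add_divide_distrib ring_distribs)
  next
    case False
    then have "integral {min s t..max s t} (speed H \<gamma>) = - curve_length H \<gamma> / real N"
      using split assms(4,5) by (simp add: add_divide_distrib ring_distribs)
    moreover have "0 \<le> integral {min s t..max s t} (speed H \<gamma>)"
      using s by (intro arc_length_nonneg[OF \<gamma>]) auto
    ultimately show ?thesis using curve_length_nonneg[OF \<gamma>] by (auto simp: divide_le_0_iff)
  qed
qed

lemma E_tra_nonneg: "0 \<le> E_tra H N p"
  by (simp add: E_tra_eq_sum_midpoint gmet_nonneg sum_nonneg)

lemma E_tra_arc_length_sample_le:
  assumes \<gamma>: "pw_C1 \<gamma>" and N: "N \<ge> 1"
  defines "L \<equiv> curve_length H \<gamma>"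
  obtains q where "q 0 = \<gamma> 0" "q N = \<gamma> 1"
    "E_tra H N q \<le> L\<^sup>2 + LH / 2 * sqrt (L\<^sup>2 / c1) ^ 3 / real N"
proof -
  obtain \<tau> where \<tau>: "\<tau> 0 = 0" "\<tau> N = 1"
    "\<And>n. n \<le> N \<Longrightarrow> \<tau> n \<in> {0..1} \<and> integral {0..\<tau> n} (speed H \<gamma>) = real n / real N * L"
    using arc_length_grid[OF \<gamma> N] unfolding L_def by blast
  define q where "q n = \<gamma> (\<tau> n)" for n
  define K where "K = 1 + LH * (L / real N / (2 * sqrt c1)) / c1"
  have L: "0 \<le> L" unfolding L_def by (rule curve_length_nonneg[OF \<gamma>])
  have step: "gmet H (midpoint (q n) (q (Suc n))) (q (Suc n) - q n) (q (Suc n) - q n) \<le> K * (L / N)\<^sup>2"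
    if n: "n < N" for n
  proof -
    \<comment> \<open>The sampling times increase only if \<open>L > 0\<close>.\<close>
    define a b where "a = min (\<tau> n) (\<tau> (Suc n))" and "b = max (\<tau> n) (\<tau> (Suc n))"
    have ab: "0 \<le> a" "a \<le> b" "b \<le> 1"
      using \<tau>(3)[of n] \<tau>(3)[of "Suc n"] n by (auto simp: a_def b_def)
    have "integral {a..b} (speed H \<gamma>) = L / N"
      unfolding a_def b_def L_def using \<tau>(3)[of n] \<tau>(3)[of "Suc n"] n
      by (intro arc_length_between_samples[OF \<gamma>]) (auto simp: L_def)
    then have chord: "gmet H (midpoint (\<gamma> a) (\<gamma> b)) (\<gamma> b - \<gamma> a) (\<gamma> b - \<gamma> a) \<le> K * (L / N)\<^sup>2"
      using midpoint_chord_energy_le[OF \<gamma> ab] by (simp add: K_def)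
    show ?thesis
    proof (cases "\<tau> n \<le> \<tau> (Suc n)")
      case True
      with chord show ?thesis by (simp add: q_def a_def b_def)
    next
      case False
      then have "q (Suc n) - q n = - (\<gamma> b - \<gamma> a)" "midpoint (q n) (q (Suc n)) = midpoint (\<gamma> a) (\<gamma> b)"
        by (simp_all add: q_def a_def b_def midpoint_sym)
      with chord show ?thesis by (simp only: gmet_uminus)
    qed
  qed
  have "E_tra H N q \<le> real N * (\<Sum>n<N. K * (L / N)\<^sup>2)"
    unfolding E_tra_eq_sum_midpoint using step by (intro mult_left_mono sum_mono) auto
  also have "\<dots> = K * L\<^sup>2" using N by (simp add: power2_eq_square)
  also have "\<dots> \<le> L\<^sup>2 + LH / 2 * sqrt (L\<^sup>2 / c1) ^ 3 / real N"
    unfolding K_def using c1_pos LH_nonneg L N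
    by (intro factor_excess_le) (auto simp: real_sqrt_divide mult_ac)
  finally show thesis using \<tau>(1,2) by (intro that[of q]) (simp_all add: q_def)
qed

lemma E_tra_linepath_le:
  assumes "N \<ge> 1"
  shows "E_tra H N (\<lambda>n. linepath x y (real n / real N)) \<le> c2 * (norm (y - x))\<^sup>2"
proof -
  have step: "linepath x y (real (Suc n) / real N) - linepath x y (real n / real N) = (1 / real N) *\<^sub>R (y - x)"
    for n
    by (simp add: linepath_def algebra_simps add_divide_distrib)
  have "E_tra H N (\<lambda>n. linepath x y (real n / real N)) \<le> real N * (\<Sum>n<N. (1 / real N)\<^sup>2 * (c2 * (norm (y - x))\<^sup>2))"
    unfolding E_tra_eq_sum_midpoint step gmet_scaleR using upper_bound
    by (intro mult_left_mono sum_mono) auto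
  also have "\<dots> = c2 * (norm (y - x))\<^sup>2" using assms by (simp add: power2_eq_square)
  finally show ?thesis .
qed

end

section \<open>Piecewise linear interpolation\<close>

lemma lin_interp_eq_segment:
  assumes "n < N" "real n / real N < t" "t < real (Suc n) / real N"
  shows "lin_interp N p t = p n + (real N * t - real n) *\<^sub>R (p (Suc n) - p n)"
proof -
  have "real n < real N * t" "real N * t < real n + 1"
    using assms by (simp_all add: field_simps)
  then have "nat \<lfloor>real N * t\<rfloor> = n" by linarith
  with assms(1) show ?thesis by (simp add: lin_interp_def Let_def algebra_simps)
qed

lemma velocity_lin_interp:
  assumes "n < N" "real n / real N < t" "t < real (Suc n) / real N"
  shows "velocity (lin_interp N p) t = real N *\<^sub>R (p (Suc n) - p n)"
proof -
  have "((\<lambda>t. p n + (real N * t - real n) *\<^sub>R (p (Suc n) - p n)) has_vector_derivative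
      real N *\<^sub>R (p (Suc n) - p n)) (at t)"
    by (auto intro!: derivative_eq_intros)
  then have "(lin_interp N p has_vector_derivative real N *\<^sub>R (p (Suc n) - p n)) (at t)"
  proof (rule has_vector_derivative_transform_within_open[where S="{real n / real N<..<real (Suc n) / real N}"])
    fix y assume "y \<in> {real n / real N<..<real (Suc n) / real N}"
    then show "p n + (real N * y - real n) *\<^sub>R (p (Suc n) - p n) = lin_interp N p y"
      using lin_interp_eq_segment[OF assms(1), of y p] by simp
  qed (use assms in auto)
  moreover have "0 < t" using assms(2) by (rule le_less_trans[rotated]) simp
  moreover have "t < 1"
    using assms(1) by (intro less_le_trans[OF assms(3)]) (simp add: field_simps)
  ultimately show ?thesis by (rule velocity_eqI)
qed

lemma has_integral_uniform_partition:
  fixes f :: "real \<Rightarrow> 'a::banach"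
  assumes "\<And>n. n < N \<Longrightarrow> (f has_integral I n) {real n / real N..real (Suc n) / real N}"
    and "k \<le> N"
  shows "(f has_integral (\<Sum>n<k. I n)) {0..real k / real N}"
  using assms(2)
proof (induction k)
  case 0
  show ?case using has_integral_refl(1)[of f 0] by (simp add: cbox_interval)
next
  case (Suc k)
  have "(f has_integral (\<Sum>n<k. I n) + I k) {0..real (Suc k) / real N}"
    using Suc assms(1)[of k]
    by (intro Henstock_Kurzweil_Integration.has_integral_combine[of 0 "real k / real N"])
      (auto intro: divide_right_mono)
  then show ?case by simp
qed

context elliptic_lipschitz_metric
begin

lemma lin_interp_segment_length_le:
  fixes p :: "nat \<Rightarrow> real^'n"
  assumes n: "n < N"
  defines "\<Delta> \<equiv> p (Suc n) - p n"
  obtains l where "(speed H (lin_interp N p) has_integral l) {real n / real N..real (Suc n) / real N}"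
    "l \<le> sqrt ((1 + LH * (norm \<Delta> / 2) / c1) * gmet H (midpoint (p n) (p (Suc n))) \<Delta> \<Delta>)"
proof -
  define lo hi where "lo = real n / real N" and "hi = real (Suc n) / real N"
  define K where "K = 1 + LH * (norm \<Delta> / 2) / c1"
  define g where "g = gmet H (midpoint (p n) (p (Suc n))) \<Delta> \<Delta>"
  define \<phi> where "\<phi> t = sqrt (gmet H (p n + (real N * t - real n) *\<^sub>R \<Delta>) (real N *\<^sub>R \<Delta>) (real N *\<^sub>R \<Delta>))"
    for t
  have N: "0 < real N" using n by simp
  have speed_eq: "speed H (lin_interp N p) t = \<phi> t" if "t \<in> {lo..hi} - {lo, hi}" for t
  proof -
    have t: "real n / real N < t" "t < real (Suc n) / real N"
      using that by (auto simp: lo_def hi_def)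
    show ?thesis
      unfolding speed_def lin_interp_eq_segment[OF n t] velocity_lin_interp[OF n t] \<phi>_def \<Delta>_def ..
  qed
  have "continuous_on {lo..hi} (\<lambda>t. (p n + (real N * t - real n) *\<^sub>R \<Delta>, real N *\<^sub>R \<Delta>))"
    by (intro continuous_intros)
  from continuous_on_compose2[OF continuous_on_gmet_norm this]
  have \<phi>_integrable: "\<phi> integrable_on {lo..hi}"
    by (intro integrable_continuous_interval) (simp add: \<phi>_def)
  then have speed_integral: "(speed H (lin_interp N p) has_integral integral {lo..hi} \<phi>) {lo..hi}"
    using has_integral_spike_finite[of "{lo, hi}" "{lo..hi}" "speed H (lin_interp N p)" \<phi>] speed_eq
    by blast
  have "\<phi> t \<le> real N * sqrt (K * g)" if "t \<in> {lo..hi}" for t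
  proof -
    have "0 \<le> real N * t - real n" "real N * t - real n \<le> 1"
      using that N by (auto simp: lo_def hi_def field_simps)
    from gmet_segment_le_midpoint[OF this, of "p n" "p (Suc n)"]
    have "sqrt (gmet H (p n + (real N * t - real n) *\<^sub>R \<Delta>) \<Delta> \<Delta>) \<le> sqrt (K * g)"
      unfolding K_def g_def \<Delta>_def by (rule real_sqrt_le_mono)
    then show ?thesis
      using N by (simp add: \<phi>_def gmet_scaleR real_sqrt_mult)
  qed
  then have "integral {lo..hi} \<phi> \<le> integral {lo..hi} (\<lambda>_. real N * sqrt (K * g))"
    using \<phi>_integrable by (intro integral_le) auto
  also have "\<dots> = sqrt (K * g)"
    using N by (simp add: lo_def hi_def diff_divide_distrib[symmetric] divide_right_mono)
  finally show thesis
    using that speed_integral by (simp add: lo_def hi_def K_def g_def)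
qed

lemma norm_step_le_E_tra:
  fixes p :: "nat \<Rightarrow> real^'n"
  assumes "n < N"
  shows "norm (p (Suc n) - p n) \<le> sqrt (E_tra H N p / c1) / sqrt (real N)"
proof -
  let ?g = "\<lambda>k. gmet H (midpoint (p k) (p (Suc k))) (p (Suc k) - p k) (p (Suc k) - p k)"
  have "c1 * (norm (p (Suc n) - p n))\<^sup>2 \<le> ?g n" by (rule lower_bound)
  also have "\<dots> \<le> (\<Sum>k<N. ?g k)" using assms gmet_nonneg by (intro member_le_sum) auto
  also have "\<dots> = E_tra H N p / real N" using assms by (simp add: E_tra_eq_sum_midpoint)
  finally have "(norm (p (Suc n) - p n))\<^sup>2 \<le> E_tra H N p / c1 / real N"
    using c1_pos assms by (simp add: field_simps)
  then have "norm (p (Suc n) - p n) \<le> sqrt (E_tra H N p / c1 / real N)" by (rule real_le_rsqrt)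
  then show ?thesis by (simp add: real_sqrt_divide real_sqrt_mult)
qed

lemma curve_length_lin_interp_le:
  fixes p :: "nat \<Rightarrow> real^'n"
  assumes N: "N \<ge> 1"
  defines "E \<equiv> E_tra H N p"
  shows "(curve_length H (lin_interp N p))\<^sup>2 \<le> E + LH / 2 * sqrt (E / c1) ^ 3 / sqrt (real N)"
proof -
  define g where "g n = gmet H (midpoint (p n) (p (Suc n))) (p (Suc n) - p n) (p (Suc n) - p n)" for n
  define K where "K = 1 + LH * (sqrt (E / c1) / (2 * sqrt (real N))) / c1"
  have g: "0 \<le> g n" for n by (simp add: g_def gmet_nonneg)
  have E: "0 \<le> E" unfolding E_def by (rule E_tra_nonneg)
  have K: "1 \<le> K" using LH_nonneg c1_pos E by (simp add: K_def)
  have "\<exists>l. n < N \<longrightarrow> (speed H (lin_interp N p) has_integral l) {real n / real N..real (Suc n) / real N}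
      \<and> l \<le> sqrt (K * g n)" for n
  proof (cases "n < N")
    case True
    obtain l where l: "(speed H (lin_interp N p) has_integral l) {real n / real N..real (Suc n) / real N}"
      "l \<le> sqrt ((1 + LH * (norm (p (Suc n) - p n) / 2) / c1) * g n)"
      using lin_interp_segment_length_le[OF True] unfolding g_def by blast
    have "(1 + LH * (norm (p (Suc n) - p n) / 2) / c1) * g n \<le> K * g n"
      using norm_step_le_E_tra[OF True, of p] LH_nonneg c1_pos g unfolding K_def E_def
      by (intro mult_right_mono add_left_mono divide_right_mono mult_left_mono) auto
    then have "l \<le> sqrt (K * g n)" using l(2) real_sqrt_le_mono order_trans by blast
    with l(1) show ?thesis by blast
  qed simp
  then obtain l where l: "\<And>n. n < N \<Longrightarrow>
      (speed H (lin_interp N p) has_integral l n) {real n / real N..real (Suc n) / real N} \<and>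
      l n \<le> sqrt (K * g n)"
    by metis
  have "(speed H (lin_interp N p) has_integral (\<Sum>n<N. l n)) {0..1}"
    using has_integral_uniform_partition[of N "speed H (lin_interp N p)" l N] l N by simp
  then have L: "curve_length H (lin_interp N p) = (\<Sum>n<N. l n)" and L_nonneg: "0 \<le> (\<Sum>n<N. l n)"
    by (auto simp: curve_length_eq_integral_speed integral_unique intro: has_integral_nonneg speed_nonneg)
  have "(curve_length H (lin_interp N p))\<^sup>2 \<le> (\<Sum>n<N. sqrt (K * g n))\<^sup>2"
    unfolding L using L_nonneg l by (intro power_mono sum_mono) auto
  also have "\<dots> \<le> (\<Sum>n<N. (sqrt (K * g n))\<^sup>2) * real N"
    using sum_squared_le_sum_of_squares[of "\<lambda>n. sqrt (K * g n)" "{..<N}"] by simp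
  also have "\<dots> = K * E"
    using K g by (simp add: E_def g_def E_tra_eq_sum_midpoint sum_distrib_left[symmetric] mult_ac)
  also have "\<dots> \<le> E + LH / 2 * sqrt (E / c1) ^ 3 / sqrt (real N)"
    unfolding K_def using c1_pos LH_nonneg E N by (intro factor_excess_le) auto
  finally show ?thesis .
qed

lemma lin_interp_minimizer_length_le:
  fixes p :: "nat \<Rightarrow> real^'n"
  assumes N: "N \<ge> 1" and x: "x \<in> X0" and y: "y \<in> X1"
    and minimal: "\<And>q. q 0 \<in> X0 \<Longrightarrow> q N \<in> X1 \<Longrightarrow> E_tra H N p \<le> E_tra H N q"
    and \<gamma>: "pw_C1 \<gamma>" "\<gamma> 0 \<in> X0" "\<gamma> 1 \<in> X1"
  shows "(curve_length H (lin_interp N p))\<^sup>2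
    \<le> (curve_length H \<gamma>)\<^sup>2 + LH * sqrt (c2 * (norm (y - x))\<^sup>2 / c1) ^ 3 / sqrt (real N)"
proof -
  define B E L where "B = c2 * (norm (y - x))\<^sup>2" and "E = E_tra H N p" and "L = curve_length H \<gamma>"
  define excess where "excess X = LH / 2 * sqrt (X / c1) ^ 3 / sqrt (real N)" for X
  have excess_mono: "excess X \<le> excess B" if "0 \<le> X" "X \<le> B" for X
    unfolding excess_def using that c1_pos LH_nonneg N
    by (intro divide_right_mono mult_left_mono power_mono real_sqrt_le_mono) auto
  have "E \<le> E_tra H N (\<lambda>n. linepath x y (real n / real N))"
    unfolding E_def using x y N by (intro minimal) (auto simp: linepath_def)
  also have "\<dots> \<le> B" unfolding B_def by (rule E_tra_linepath_le[OF N])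
  finally have "E \<le> B" .
  have E: "0 \<le> E" unfolding E_def by (rule E_tra_nonneg)
  have "E \<le> L\<^sup>2 + excess B"
  proof (cases "L\<^sup>2 \<le> B")
    case True
    obtain q where q: "q 0 = \<gamma> 0" "q N = \<gamma> 1" "E_tra H N q \<le> L\<^sup>2 + LH / 2 * sqrt (L\<^sup>2 / c1) ^ 3 / real N"
      using E_tra_arc_length_sample_le[OF \<gamma>(1) N] unfolding L_def by blast
    have "E \<le> E_tra H N q" unfolding E_def using q \<gamma> by (intro minimal) auto
    moreover have "LH / 2 * sqrt (L\<^sup>2 / c1) ^ 3 / real N \<le> excess (L\<^sup>2)"
      unfolding excess_def using N LH_nonneg c1_pos
      by (intro divide_left_mono) (auto simp: real_sqrt_le_iff' power2_eq_square)
    ultimately show ?thesis using q(3) excess_mono[OF _ True] by simp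
  next
    case False
    then show ?thesis using \<open>E \<le> B\<close> excess_mono[of 0] E by (simp add: excess_def)
  qed
  moreover have "(curve_length H (lin_interp N p))\<^sup>2 \<le> E + excess E"
    using curve_length_lin_interp_le[OF N, of p] by (simp add: E_def excess_def)
  ultimately show ?thesis
    using excess_mono[OF E \<open>E \<le> B\<close>] by (simp add: excess_def B_def L_def)
qed

lemma lin_interp_minimizer_excess_le:
  fixes p :: "nat \<Rightarrow> real^'n"
  assumes N: "N \<ge> 1" and x: "x \<in> X0" and y: "y \<in> X1"
    and minimal: "\<And>q. q 0 \<in> X0 \<Longrightarrow> q N \<in> X1 \<Longrightarrow> E_tra H N p \<le> E_tra H N q"
  shows "(curve_length H (lin_interp N p))\<^sup>2
      - (INF \<gamma>\<in>{\<gamma>. pw_C1 \<gamma> \<and> \<gamma> 0 \<in> X0 \<and> \<gamma> 1 \<in> X1}. (curve_length H \<gamma>)\<^sup>2)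
    \<le> LH * sqrt (c2 * (norm (y - x))\<^sup>2 / c1) ^ 3 / sqrt (real N)"
proof -
  have "linepath x y \<in> {\<gamma>. pw_C1 \<gamma> \<and> \<gamma> 0 \<in> X0 \<and> \<gamma> 1 \<in> X1}"
    using pw_C1_linepath x y by (simp add: linepath_0' linepath_1')
  then have "(curve_length H (lin_interp N p))\<^sup>2 - LH * sqrt (c2 * (norm (y - x))\<^sup>2 / c1) ^ 3 / sqrt (real N)
      \<le> (INF \<gamma>\<in>{\<gamma>. pw_C1 \<gamma> \<and> \<gamma> 0 \<in> X0 \<and> \<gamma> 1 \<in> X1}. (curve_length H \<gamma>)\<^sup>2)"
    using lin_interp_minimizer_length_le[OF N x y minimal]
    by (intro cINF_greatest) (auto simp: algebra_simps)
  then show ?thesis by linarith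
qed

end

theorem theorem1p2:
  fixes c1 c2 LH d :: real and X0 X1 :: "(real^'n) set"
  assumes "c1 > 0" "c2 > 0" "LH \<ge> 0"
    and "closed X0" "closed X1" "X0 \<noteq> {}" "X1 \<noteq> {}" "bounded X0 \<or> bounded X1"
  shows "\<exists>C. \<forall>H. smooth_metric H
      \<and> (\<forall>x u. c1 * norm u ^ 2 \<le> gmet H x u u \<and> gmet H x u u \<le> c2 * norm u ^ 2)
      \<and> (\<forall>x y. onorm (\<lambda>v. (H x - H y) *v v) \<le> LH * dist x y)
      \<and> gsetdist H X0 X1 = d
      \<longrightarrow> (\<forall>N p. N \<ge> 1 \<and> p 0 \<in> X0 \<and> p N \<in> X1
             \<and> (\<forall>q. q 0 \<in> X0 \<and> q N \<in> X1 \<longrightarrow> E_tra H N p \<le> E_tra H N q)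
           \<longrightarrow> (curve_length H (lin_interp N p))\<^sup>2
                 - (INF \<gamma>\<in>{\<gamma>. pw_C1 \<gamma> \<and> \<gamma> 0 \<in> X0 \<and> \<gamma> 1 \<in> X1}. (curve_length H \<gamma>)\<^sup>2)
               \<le> C / sqrt (real N))"
proof -
  obtain x y where x: "x \<in> X0" and y: "y \<in> X1" using assms(6,7) by blast
  define C where "C = LH * sqrt (c2 * (norm (y - x))\<^sup>2 / c1) ^ 3"
  have "(curve_length H (lin_interp N p))\<^sup>2
      - (INF \<gamma>\<in>{\<gamma>. pw_C1 \<gamma> \<and> \<gamma> 0 \<in> X0 \<and> \<gamma> 1 \<in> X1}. (curve_length H \<gamma>)\<^sup>2) \<le> C / sqrt (real N)"
    if "smooth_metric H" "\<forall>x u. c1 * norm u ^ 2 \<le> gmet H x u u \<and> gmet H x u u \<le> c2 * norm u ^ 2"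
      "\<forall>x y. onorm (\<lambda>v. (H x - H y) *v v) \<le> LH * dist x y"
      and N: "N \<ge> 1" and minimal: "\<forall>q. q 0 \<in> X0 \<and> q N \<in> X1 \<longrightarrow> E_tra H N p \<le> E_tra H N q"
    for H N and p :: "nat \<Rightarrow> real^'n"
  proof -
    interpret elliptic_lipschitz_metric H c1 c2 LH
      using that(1-3) assms(1,3) by unfold_locales (auto simp: smooth_metric_def)
    show ?thesis
      using lin_interp_minimizer_excess_le[OF N x y] minimal by (simp add: C_def)
  qed
  then show ?thesis by blast
qed

end
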